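(* Let $a<b$, $F:(a,b)\to\mathcal{K}(\mathbb{R}^n)$, $x_0\in(a,b)$, $\alpha>0$, and suppose $F$ is metrically $\alpha$-differentiable at $x_0$ with constant $L>0$, i.e. $F$ is metrically differentiable at $x_0$ and there is $\delta>0$ such that $\sup_{y\in F(x_0)}\mathrm{haus}([x_0,x]^MF|_y,D^M_+F(x_0)|_y)\le L|x-x_0|^\alpha$ for $0<x-x_0<\delta$ and $\sup_{y\in F(x_0)}\mathrm{haus}([x_0,x]^MF|_y,D^M_-F(x_0)|_y)\le L|x-x_0|^\alpha$ for $0<x_0-x<\delta$. Then for all $x\in(a,b)$ with $|x-x_0|<\delta$, $$\mathrm{haus}(F(x),L^MF(x))\le L|x-x_0|^{1+\alpha}.$$
   Context: $\mathcal{K}(\mathbb{R}^n)$ is the set of nonempty compact subsets of $\mathbb{R}^n$, $|\cdot|$ the Euclidean norm, $\mathrm{dist}(x,A)=\min_{a\in A}|x-a|$, $\mathrm{haus}$ the Hausdorff distance. For $a\in\mathbb{R}^n$, $B\in\mathcal{K}(\mathbb{R}^n)$, $\Pi_B(a)=\{b\in B:|a-b|=\mathrm{dist}(a,B)\}$; for $A,B\in\mathcal{K}(\mathbb{R}^n)$, $\Pi(A,B)=\{(a,b)\in A\times B: a\in\Pi_A(b)\text{ or }b\in\Pi_B(a)\}$. For $x\ne x_0$, $y_0\in F(x_0)$: $[x_0,x]^MF|_{y_0}=\{\frac{y-y_0}{x-x_0}:(y_0,y)\in\Pi(F(x_0),F(x))\}$. $F$ is metrically differentiable from the right at $x_0$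 if for every $y\in F(x_0)$ there is a nonempty set $D^M_+F(x_0)|_y$ with $\sup_{y\in F(x_0)}\mathrm{haus}(D^M_+F(x_0)|_y,[x_0,x]^MF|_y)\to0$ as $x\to x_0^+$; from the left analogously with $D^M_-F(x_0)|_y$ and $x\to x_0^-$; metrically differentiable means both. The local metric linear approximant is $L^MF(x)=\bigcup_{y\in F(x_0)}\big(\{y\}+(x-x_0)D^M_+F(x_0)|_y\big)$ for $x\ge x_0$ and $L^MF(x)=\bigcup_{y\in F(x_0)}\big(\{y\}+(x-x_0)D^M_-F(x_0)|_y\big)$ for $x<x_0$, where $\{c\}+\lambda A=\{c+\lambda a:a\in A\}$. *)

theory Defs
  imports "HOL-Analysis.Analysis" "HOL-Library.Extended_Real"
begin

text \<open>Hausdorff distance, valued in the extended reals (so that it is \<open>\<infinity>\<close> for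
  unbounded sets, as in the usual convention).\<close>
definition haus :: "'a::metric_space set \<Rightarrow> 'a set \<Rightarrow> ereal" where
  "haus A B = max (SUP a\<in>A. ereal (infdist a B)) (SUP b\<in>B. ereal (infdist b A))"

definition metric_proj :: "'a::metric_space \<Rightarrow> 'a set \<Rightarrow> 'a set" where
  "metric_proj a B = {b \<in> B. dist a b = infdist a B}"

definition metric_pairs :: "'a::metric_space set \<Rightarrow> 'a set \<Rightarrow> ('a \<times> 'a) set" where
  "metric_pairs A B = {(a, b). a \<in> A \<and> b \<in> B \<and> (a \<in> metric_proj b A \<or> b \<in> metric_proj a B)}"

definition metric_dd :: "(real \<Rightarrow> 'a::real_normed_vector set) \<Rightarrow> real \<Rightarrow> real \<Rightarrow> 'a \<Rightarrow> 'a set" where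
  "metric_dd F x0 x y0 = {(y - y0) /\<^sub>R (x - x0) | y. (y0, y) \<in> metric_pairs (F x0) (F x)}"

definition metric_deriv_right :: "(real \<Rightarrow> 'a::real_normed_vector set) \<Rightarrow> real \<Rightarrow> ('a \<Rightarrow> 'a set) \<Rightarrow> bool" where
  "metric_deriv_right F x0 D \<longleftrightarrow> (\<forall>y\<in>F x0. D y \<noteq> {}) \<and>
     (\<forall>\<epsilon>>0. eventually (\<lambda>x. \<forall>y\<in>F x0. haus (D y) (metric_dd F x0 x y) \<le> ereal \<epsilon>) (at_right x0))"

definition metric_deriv_left :: "(real \<Rightarrow> 'a::real_normed_vector set) \<Rightarrow> real \<Rightarrow> ('a \<Rightarrow> 'a set) \<Rightarrow> bool" where
  "metric_deriv_left F x0 D \<longleftrightarrow> (\<forall>y\<in>F x0. D y \<noteq> {}) \<and>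
     (\<forall>\<epsilon>>0. eventually (\<lambda>x. \<forall>y\<in>F x0. haus (D y) (metric_dd F x0 x y) \<le> ereal \<epsilon>) (at_left x0))"

definition metric_lin_approx :: "(real \<Rightarrow> 'a::real_normed_vector set) \<Rightarrow> real \<Rightarrow> ('a \<Rightarrow> 'a set) \<Rightarrow> ('a \<Rightarrow> 'a set) \<Rightarrow> real \<Rightarrow> 'a set" where
  "metric_lin_approx F x0 Dp Dm x =
     (if x \<ge> x0 then (\<Union>y\<in>F x0. (\<lambda>d. y + (x - x0) *\<^sub>R d) ` Dp y)
      else (\<Union>y\<in>F x0. (\<lambda>d. y + (x - x0) *\<^sub>R d) ` Dm y))"

end

theory Submission
  imports Defs
begin

text \<open>Put \<open>h = x - x0\<close>. Each \<open>z \<in> F x\<close> forms a metric pair with a nearest point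
  \<open>y \<in> F x0\<close>, so \<open>z = y + h e\<close> with \<open>e \<in> [x0,x]^M F|_y\<close>, and \<open>e\<close> lies within
  \<open>L |h|^\<alpha>\<close> of \<open>D y\<close>. Conversely each \<open>d \<in> D y\<close> lies within \<open>L |h|^\<alpha>\<close> of some
  \<open>e \<in> [x0,x]^M F|_y\<close>, and \<open>y + h e \<in> F x\<close>. The affine map \<open>e \<mapsto> y + h e\<close> scales
  distances by \<open>|h|\<close>, turning the error \<open>L |h|^\<alpha>\<close> into \<open>L |h|^(1+\<alpha>)\<close>.\<close>

lemma infdist_le_haus_left: "a \<in> A \<Longrightarrow> ereal (infdist a B) \<le> haus A B"
  unfolding haus_def by (meson SUP_upper max.coboundedI1)

lemma infdist_le_haus_right: "b \<in> B \<Longrightarrow> ereal (infdist b A) \<le> haus A B"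
  unfolding haus_def by (meson SUP_upper max.coboundedI2)

lemma haus_leI:
  assumes "\<And>a. a \<in> A \<Longrightarrow> infdist a B \<le> c" and "\<And>b. b \<in> B \<Longrightarrow> infdist b A \<le> c"
  shows "haus A B \<le> ereal c"
  unfolding haus_def using assms by (auto intro!: SUP_least)

lemma compact_infdist_attained:
  assumes "compact A" "A \<noteq> {}"
  obtains a where "a \<in> A" "infdist x A = dist x a"
proof -
  obtain a where a: "a \<in> A" "\<And>b. b \<in> A \<Longrightarrow> dist x a \<le> dist x b"
    using continuous_attains_inf[OF assms continuous_on_dist[OF continuous_on_const continuous_on_id]]
    by blast
  then have "infdist x A = dist x a"
    using assms(2) by (metis antisym cINF_greatest infdist_le infdist_notempty)
  with a show thesis using that by blast
qed

lemma infdist_affine_image_le: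
  fixes y z :: "'a::real_normed_vector"
  shows "infdist (y + h *\<^sub>R z) ((\<lambda>d. y + h *\<^sub>R d) ` D) \<le> \<bar>h\<bar> * infdist z D"
proof (cases "D = {} \<or> h = 0")
  case False
  let ?t = "infdist (y + h *\<^sub>R z) ((\<lambda>d. y + h *\<^sub>R d) ` D) / \<bar>h\<bar>"
  have "?t \<le> dist z d" if "d \<in> D" for d
  proof -
    have "infdist (y + h *\<^sub>R z) ((\<lambda>d. y + h *\<^sub>R d) ` D) \<le> dist (y + h *\<^sub>R z) (y + h *\<^sub>R d)"
      using that by (intro infdist_le) auto
    also have "\<dots> = \<bar>h\<bar> * dist z d"
      by (simp add: dist_norm flip: scaleR_diff_right)
    finally show ?thesis
      using False by (simp add: divide_le_eq mult.commute)
  qed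
  then have "?t \<le> infdist z D"
    using False by (metis cINF_greatest infdist_notempty)
  then show ?thesis
    using False by (simp add: divide_le_eq mult.commute)
qed (auto simp: image_constant_conv infdist_def[of _ "{}"])

lemma metric_pairs_ex_left:
  assumes "compact A" "A \<noteq> {}" "b \<in> B"
  obtains a where "(a, b) \<in> metric_pairs A B"
proof -
  obtain a where "a \<in> A" "infdist b A = dist b a"
    using compact_infdist_attained[OF assms(1,2)] by blast
  then show thesis
    using that assms(3) by (auto simp: metric_pairs_def metric_proj_def dist_commute)
qed

lemma metric_pairs_ex_right:
  assumes "compact B" "B \<noteq> {}" "a \<in> A"
  obtains b where "(a, b) \<in> metric_pairs A B"
proof -
  obtain b where "b \<in> B" "infdist a B = dist a b"
    using compact_infdist_attained[OF assms(1,2)] by blast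
  then show thesis
    using that assms(3) by (auto simp: metric_pairs_def metric_proj_def)
qed

lemma metric_dd_affine_image_subset:
  assumes "x \<noteq> x0"
  shows "(\<lambda>e. y + (x - x0) *\<^sub>R e) ` metric_dd F x0 x y \<subseteq> F x"
  using assms by (auto simp: metric_dd_def metric_pairs_def)

lemma haus_metric_lin_approx_le:
  fixes F :: "real \<Rightarrow> 'a::real_normed_vector set"
  assumes F: "compact (F x0)" "F x0 \<noteq> {}" "compact (F x)" "F x \<noteq> {}"
    and "x \<noteq> x0"
    and D: "\<And>y. y \<in> F x0 \<Longrightarrow> D y \<noteq> {}"
    and dd_close: "\<forall>y\<in>F x0. haus (metric_dd F x0 x y) (D y) \<le> ereal c"
  shows "haus (F x) (\<Union>y\<in>F x0. (\<lambda>d. y + (x - x0) *\<^sub>R d) ` D y) \<le> ereal (\<bar>x - x0\<bar> * c)"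
proof (rule haus_leI)
  let ?h = "x - x0"
  let ?A = "\<lambda>y. (\<lambda>d. y + ?h *\<^sub>R d)"
  fix z assume "z \<in> F x"
  then obtain y where pair: "(y, z) \<in> metric_pairs (F x0) (F x)"
    using metric_pairs_ex_left[OF F(1,2)] by blast
  define e where "e = (z - y) /\<^sub>R ?h"
  have y: "y \<in> F x0" and "e \<in> metric_dd F x0 x y"
    using pair by (auto simp: metric_dd_def metric_pairs_def e_def)
  then have "infdist e (D y) \<le> c"
    using infdist_le_haus_left dd_close order_trans ereal_less_eq(3) by metis
  have "infdist z (\<Union>y\<in>F x0. ?A y ` D y) \<le> infdist z (?A y ` D y)"
    using y D[OF y] by (intro infdist_mono) auto
  also have "\<dots> \<le> \<bar>?h\<bar> * infdist e (D y)"
    using infdist_affine_image_le[of y ?h e] \<open>x \<noteq> x0\<close> by (simp add: e_def)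
  also have "\<dots> \<le> \<bar>?h\<bar> * c"
    using \<open>infdist e (D y) \<le> c\<close> by (simp add: mult_left_mono)
  finally show "infdist z (\<Union>y\<in>F x0. ?A y ` D y) \<le> \<bar>?h\<bar> * c" .
next
  let ?h = "x - x0"
  fix w assume "w \<in> (\<Union>y\<in>F x0. (\<lambda>d. y + ?h *\<^sub>R d) ` D y)"
  then obtain y d where y: "y \<in> F x0" and d: "d \<in> D y" and w: "w = y + ?h *\<^sub>R d"
    by blast
  obtain z where "(y, z) \<in> metric_pairs (F x0) (F x)"
    using metric_pairs_ex_right[OF F(3,4) y] by blast
  then have "metric_dd F x0 x y \<noteq> {}"
    by (auto simp: metric_dd_def)
  have "infdist d (metric_dd F x0 x y) \<le> c"
    using infdist_le_haus_right[OF d] dd_close y order_trans ereal_less_eq(3) by metis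
  have "infdist w (F x) \<le> infdist w ((\<lambda>e. y + ?h *\<^sub>R e) ` metric_dd F x0 x y)"
    using metric_dd_affine_image_subset[OF \<open>x \<noteq> x0\<close>] \<open>metric_dd F x0 x y \<noteq> {}\<close>
    by (intro infdist_mono) auto
  also have "\<dots> \<le> \<bar>?h\<bar> * infdist d (metric_dd F x0 x y)"
    unfolding w by (rule infdist_affine_image_le)
  also have "\<dots> \<le> \<bar>?h\<bar> * c"
    using \<open>infdist d (metric_dd F x0 x y) \<le> c\<close> by (simp add: mult_left_mono)
  finally show "infdist w (F x) \<le> \<bar>?h\<bar> * c" .
qed

lemma metric_lin_approx_base:
  assumes "\<And>y. y \<in> F x0 \<Longrightarrow> Dp y \<noteq> {}"
  shows "metric_lin_approx F x0 Dp Dm x0 = F x0"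
  using assms by (auto simp: metric_lin_approx_def image_constant_conv)

theorem mainTheorem3:
  fixes F :: "real \<Rightarrow> (real ^ 'n) set"
    and a b x0 \<alpha> L \<delta> :: real
    and Dp Dm :: "real ^ 'n \<Rightarrow> (real ^ 'n) set"
  assumes "a < b"
    and "\<And>x. x \<in> {a<..<b} \<Longrightarrow> F x \<noteq> {} \<and> compact (F x)"
    and "x0 \<in> {a<..<b}"
    and "\<alpha> > 0" and "L > 0"
    and "metric_deriv_right F x0 Dp"
    and "metric_deriv_left F x0 Dm"
    and "\<delta> > 0"
    and "\<And>x. x \<in> {a<..<b} \<Longrightarrow> 0 < x - x0 \<Longrightarrow> x - x0 < \<delta> \<Longrightarrow>
           \<forall>y\<in>F x0. haus (metric_dd F x0 x y) (Dp y) \<le> ereal (L * \<bar>x - x0\<bar> powr \<alpha>)"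
    and "\<And>x. x \<in> {a<..<b} \<Longrightarrow> 0 < x0 - x \<Longrightarrow> x0 - x < \<delta> \<Longrightarrow>
           \<forall>y\<in>F x0. haus (metric_dd F x0 x y) (Dm y) \<le> ereal (L * \<bar>x - x0\<bar> powr \<alpha>)"
  shows "\<forall>x\<in>{a<..<b}. \<bar>x - x0\<bar> < \<delta> \<longrightarrow>
           haus (F x) (metric_lin_approx F x0 Dp Dm x) \<le> ereal (L * \<bar>x - x0\<bar> powr (1 + \<alpha>))"
proof (intro ballI impI)
  fix x assume x: "x \<in> {a<..<b}" and near: "\<bar>x - x0\<bar> < \<delta>"
  have Dp: "\<And>y. y \<in> F x0 \<Longrightarrow> Dp y \<noteq> {}" and Dm: "\<And>y. y \<in> F x0 \<Longrightarrow> Dm y \<noteq> {}"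
    using assms(6,7) by (auto simp: metric_deriv_right_def metric_deriv_left_def)
  show "haus (F x) (metric_lin_approx F x0 Dp Dm x) \<le> ereal (L * \<bar>x - x0\<bar> powr (1 + \<alpha>))"
  proof (cases "x = x0")
    case True
    then show ?thesis
      using metric_lin_approx_base[OF Dp] by (auto intro: haus_leI)
  next
    case False
    define D where "D = (if x0 \<le> x then Dp else Dm)"
    have "metric_lin_approx F x0 Dp Dm x = (\<Union>y\<in>F x0. (\<lambda>d. y + (x - x0) *\<^sub>R d) ` D y)"
      by (simp add: metric_lin_approx_def D_def)
    moreover have "haus (F x) (\<Union>y\<in>F x0. (\<lambda>d. y + (x - x0) *\<^sub>R d) ` D y)
        \<le> ereal (\<bar>x - x0\<bar> * (L * \<bar>x - x0\<bar> powr \<alpha>))"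
    proof (rule haus_metric_lin_approx_le)
      show "compact (F x0)" "F x0 \<noteq> {}" "compact (F x)" "F x \<noteq> {}"
        using assms(2) x assms(3) by auto
      show "\<And>y. y \<in> F x0 \<Longrightarrow> D y \<noteq> {}"
        using Dp Dm by (simp add: D_def)
      show "\<forall>y\<in>F x0. haus (metric_dd F x0 x y) (D y) \<le> ereal (L * \<bar>x - x0\<bar> powr \<alpha>)"
        using assms(9,10)[OF x] near False by (auto simp: D_def)
    qed fact
    moreover have "\<bar>x - x0\<bar> * (L * \<bar>x - x0\<bar> powr \<alpha>) = L * \<bar>x - x0\<bar> powr (1 + \<alpha>)"
      using False by (simp add: powr_add)
    ultimately show ?thesis
      by simp
  qed
qed
end
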